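(* Let $T$ be a closed and densely defined operator on $\mathcal K=L^2(\mathbb R_+;\mathsf k)$. The following are equivalent: (i) $T$ is affiliated to $L^\infty(\mathbb R_+)\bar\otimes B(\mathsf k)$; (ii) $Tp_t\supseteq p_tT$ for all $t\ge0$; (iii) for all $f\in\mathrm{Dom}\,T^*$ and $g\in\mathrm{Dom}\,T$, $\langle f(t),(Tg)(t)\rangle=\langle(T^*f)(t),g(t)\rangle$ for almost all $t\ge0$.
   Context: $\mathsf k$ is a separable complex Hilbert space and $p_t$ denotes multiplication by $1_{[0,t[}$ on $\mathcal K=L^2(\mathbb R_+;\mathsf k)$. A (possibly unbounded) operator $T$ on $\mathcal K$ is affiliated to the von Neumann algebra $L^\infty(\mathbb R_+)\bar\otimes B(\mathsf k)$ if $u^*Tu=T$ (in particular $u\,\mathrm{Dom}\,T=\mathrm{Dom}\,T$) for every unitary $u$ in its commutant, which consists of the multiplication operators $M_\varphi\otimes I_{\mathsf k}$, $\varphi\in L^\infty(\mathbb R_+)$. *)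

theory Defs
  imports "HOL-Analysis.Analysis"
begin

class complex_vector = real_vector +
  fixes scaleC :: "complex \<Rightarrow> 'a \<Rightarrow> 'a" (infixr "*\<^sub>C" 75)
  assumes scaleC_add_right: "a *\<^sub>C (x + y) = a *\<^sub>C x + a *\<^sub>C y"
    and scaleC_add_left: "(a + b) *\<^sub>C x = a *\<^sub>C x + b *\<^sub>C x"
    and scaleC_scaleC: "a *\<^sub>C (b *\<^sub>C x) = (a * b) *\<^sub>C x"
    and scaleC_one: "1 *\<^sub>C x = x"
    and scaleR_scaleC: "scaleR r x = complex_of_real r *\<^sub>C x"

class complex_normed_vector = complex_vector + real_normed_vector +
  assumes norm_scaleC: "norm (a *\<^sub>C x) = cmod a * norm x"

class complex_inner = complex_normed_vector +
  fixes cinner :: "'a \<Rightarrow> 'a \<Rightarrow> complex"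
  assumes cinner_commute: "cinner x y = cnj (cinner y x)"
    and cinner_add_right: "cinner x (y + z) = cinner x y + cinner x z"
    and cinner_scaleC_right: "cinner x (a *\<^sub>C y) = a * cinner x y"
    and cinner_self_norm: "cinner x x = complex_of_real ((norm x)\<^sup>2)"

text \<open>A separable complex Hilbert space k is a type of sort
  {complex_inner, complete_space, second_countable_topology}.\<close>

definition Rplus :: "real measure" where
  "Rplus = restrict_space lborel {0..}"

definition L2 :: "(real \<Rightarrow> 'k::complex_inner) set" where
  "L2 = {f. f \<in> borel_measurable Rplus \<and> integrable Rplus (\<lambda>t. (norm (f t))\<^sup>2)}"

definition L2norm :: "(real \<Rightarrow> 'k::complex_inner) \<Rightarrow> real" where
  "L2norm f = sqrt (\<integral>t. (norm (f t))\<^sup>2 \<partial>Rplus)"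

definition Kinner :: "(real \<Rightarrow> 'k::complex_inner) \<Rightarrow> (real \<Rightarrow> 'k) \<Rightarrow> complex" where
  "Kinner f g = (\<integral>t. cinner (f t) (g t) \<partial>Rplus)"

definition mulf :: "(real \<Rightarrow> complex) \<Rightarrow> (real \<Rightarrow> 'k::complex_inner) \<Rightarrow> (real \<Rightarrow> 'k)" where
  "mulf \<phi> f = (\<lambda>t. \<phi> t *\<^sub>C f t)"

definition pt :: "real \<Rightarrow> (real \<Rightarrow> 'k::complex_inner) \<Rightarrow> (real \<Rightarrow> 'k)" where
  "pt t = mulf (indicator {0..<t})"

section \<open>(Unbounded) linear operators on K, represented by their graphs\<close>

text \<open>A graph is a set of pairs of square-integrable representatives; it is closed under
  change of representatives (a.e. equality), single-valued modulo a.e. equality, and a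
  complex linear subspace.\<close>
definition is_operator :: "((real \<Rightarrow> 'k::complex_inner) \<times> (real \<Rightarrow> 'k)) set \<Rightarrow> bool" where
  "is_operator G \<longleftrightarrow>
     G \<subseteq> L2 \<times> L2 \<and>
     (\<forall>f g f' g'. (f, g) \<in> G \<longrightarrow> f' \<in> L2 \<longrightarrow> g' \<in> L2 \<longrightarrow>
        (AE t in Rplus. f' t = f t) \<longrightarrow> (AE t in Rplus. g' t = g t) \<longrightarrow> (f', g') \<in> G) \<and>
     (\<forall>f g f' g'. (f, g) \<in> G \<longrightarrow> (f', g') \<in> G \<longrightarrow>
        (AE t in Rplus. f t = f' t) \<longrightarrow> (AE t in Rplus. g t = g' t)) \<and>
     ((\<lambda>t. 0), (\<lambda>t. 0)) \<in> G \<and>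
     (\<forall>f g f' g'. (f, g) \<in> G \<longrightarrow> (f', g') \<in> G \<longrightarrow> ((\<lambda>t. f t + f' t), (\<lambda>t. g t + g' t)) \<in> G) \<and>
     (\<forall>c f g. (f, g) \<in> G \<longrightarrow> (mulf (\<lambda>_. c) f, mulf (\<lambda>_. c) g) \<in> G)"

definition op_dom :: "((real \<Rightarrow> 'k::complex_inner) \<times> (real \<Rightarrow> 'k)) set \<Rightarrow> (real \<Rightarrow> 'k) set" where
  "op_dom G = fst ` G"

definition closed_op :: "((real \<Rightarrow> 'k::complex_inner) \<times> (real \<Rightarrow> 'k)) set \<Rightarrow> bool" where
  "closed_op G \<longleftrightarrow>
     (\<forall>F H f g. (\<forall>n. (F n, H n) \<in> G) \<longrightarrow> f \<in> L2 \<longrightarrow> g \<in> L2 \<longrightarrow>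
        (\<lambda>n. L2norm (\<lambda>t. F n t - f t)) \<longlonglongrightarrow> 0 \<longrightarrow>
        (\<lambda>n. L2norm (\<lambda>t. H n t - g t)) \<longlonglongrightarrow> 0 \<longrightarrow> (f, g) \<in> G)"

definition densely_defined :: "((real \<Rightarrow> 'k::complex_inner) \<times> (real \<Rightarrow> 'k)) set \<Rightarrow> bool" where
  "densely_defined G \<longleftrightarrow>
     (\<forall>h \<in> L2. \<forall>e>0. \<exists>f \<in> op_dom G. L2norm (\<lambda>t. f t - h t) < e)"

definition adjoint_op :: "((real \<Rightarrow> 'k::complex_inner) \<times> (real \<Rightarrow> 'k)) set \<Rightarrow> ((real \<Rightarrow> 'k) \<times> (real \<Rightarrow> 'k)) set" where
  "adjoint_op G = {(f, h). f \<in> L2 \<and> h \<in> L2 \<and> (\<forall>(g, k) \<in> G. Kinner f k = Kinner h g)}"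

definition comp_left :: "((real \<Rightarrow> 'k::complex_inner) \<Rightarrow> (real \<Rightarrow> 'k)) \<Rightarrow> ((real \<Rightarrow> 'k) \<times> (real \<Rightarrow> 'k)) set \<Rightarrow> ((real \<Rightarrow> 'k) \<times> (real \<Rightarrow> 'k)) set" where
  "comp_left B G = {(f, B g) | f g. (f, g) \<in> G}"

definition comp_right :: "((real \<Rightarrow> 'k::complex_inner) \<times> (real \<Rightarrow> 'k)) set \<Rightarrow> ((real \<Rightarrow> 'k) \<Rightarrow> (real \<Rightarrow> 'k)) \<Rightarrow> ((real \<Rightarrow> 'k) \<times> (real \<Rightarrow> 'k)) set" where
  "comp_right G B = {(f, g). f \<in> L2 \<and> (B f, g) \<in> G}"

text \<open>Affiliation to L^infty(R_+) \<otimes> B(k): u^* T u = T for every unitary u = M_phi \<otimes> I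
  in the commutant; such u are exactly the multiplications by measurable phi with
  |phi| = 1 (each such class has a representative of modulus 1 everywhere).\<close>
definition affiliated :: "((real \<Rightarrow> 'k::complex_inner) \<times> (real \<Rightarrow> 'k)) set \<Rightarrow> bool" where
  "affiliated G \<longleftrightarrow>
     (\<forall>\<phi>::real \<Rightarrow> complex. \<phi> \<in> borel_measurable Rplus \<longrightarrow> (\<forall>t. cmod (\<phi> t) = 1) \<longrightarrow>
        comp_left (mulf (\<lambda>t. cnj (\<phi> t))) (comp_right G (mulf \<phi>)) = G)"

end

theory Submission
  imports Defs
begin

text \<open>
  (i) \<open>\<Longrightarrow>\<close> (ii): \<open>p\<^sub>t = (1 + u)/2\<close> for the unitary \<open>u\<close> given by multiplication with
  \<open>1\<close> on \<open>[0, t[\<close> and \<open>-1\<close> elsewhere.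
  (ii) \<open>\<Longrightarrow>\<close> (iii): applying the defining relation of \<open>T\<^sup>*\<close> to \<open>(p\<^sub>t g, p\<^sub>t (T g)) \<in> T\<close> shows that
  the integrable function \<open>\<langle>f, T g\<rangle> - \<langle>T\<^sup>* f, g\<rangle>\<close> has vanishing integral over every \<open>[0, t[\<close>,
  hence vanishes almost everywhere.
  (iii) \<open>\<Longrightarrow>\<close> (i): by (iii), multiplying a pair \<open>(g, T g)\<close> of the graph by a bounded measurable
  scalar function yields a pair in the graph of \<open>T\<^sup>*\<^sup>*\<close>, which equals \<open>T\<close> since \<open>T\<close> is closed.
  That \<open>T\<^sup>*\<^sup>* \<subseteq> T\<close> is shown via the nearest point of the closed graph in \<open>K \<oplus> K\<close>: its
  existence rests on the completeness of \<open>L2\<close> and uniform convexity, and the residual lies in the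
  graph of \<open>T\<^sup>*\<close> with the roles of the components swapped.
\<close>

lemma quadratic_nonneg_discriminant:
  fixes A B C :: real
  assumes nonneg: "\<And>s. 0 \<le> A + 2 * s * B + s\<^sup>2 * C" and "0 \<le> C"
  shows "B\<^sup>2 \<le> A * C"
proof (cases "C = 0")
  case True
  have "B = 0"
  proof (rule ccontr)
    assume "B \<noteq> 0"
    then show False using nonneg[of "- (A + 1) / (2 * B)"] True by (simp add: field_simps)
  qed
  then show ?thesis using True by simp
next
  case False
  with \<open>0 \<le> C\<close> have "0 < C" by simp
  have "0 \<le> (A + 2 * (- B / C) * B + (- B / C)\<^sup>2 * C) * C"
    using mult_nonneg_nonneg[OF nonneg[of "- B / C"]] \<open>0 < C\<close> by simp
  also have "\<dots> = A * C - B\<^sup>2" using \<open>0 < C\<close> by (simp add: field_simps power2_eq_square)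
  finally show ?thesis by simp
qed

lemma cinner_add_left: "cinner (x + y) (z::'a::complex_inner) = cinner x z + cinner y z"
  by (subst (1 2 3) cinner_commute) (simp add: cinner_add_right)

lemma cinner_scaleC_left: "cinner (a *\<^sub>C x) y = cnj a * cinner x (y::'a::complex_inner)"
  by (subst (1 2) cinner_commute) (simp add: cinner_scaleC_right)

lemma cinner_diff_right: "cinner x (y - z) = cinner x y - cinner x (z::'a::complex_inner)"
  using cinner_add_right[of x "y - z" z] by (simp add: algebra_simps)

lemma cinner_diff_left: "cinner (x - y) z = cinner x z - cinner y (z::'a::complex_inner)"
  using cinner_add_left[of "x - y" y z] by (simp add: algebra_simps)

lemma power2_norm_add_scaleR:
  "(norm (x + s *\<^sub>R y))\<^sup>2 = (norm x)\<^sup>2 + 2 * s * Re (cinner x y) + s\<^sup>2 * (norm (y::'a::complex_inner))\<^sup>2"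
proof -
  have "complex_of_real ((norm (x + s *\<^sub>R y))\<^sup>2) = cinner (x + s *\<^sub>R y) (x + s *\<^sub>R y)"
    by (simp only: cinner_self_norm)
  also have "\<dots> = cinner x x + s * (cinner x y + cnj (cinner x y)) + s\<^sup>2 * cinner y y"
    by (simp add: cinner_add_left cinner_add_right scaleR_scaleC cinner_scaleC_left
        cinner_scaleC_right cinner_commute[of y x] algebra_simps power2_eq_square)
  also have "\<dots> = complex_of_real ((norm x)\<^sup>2 + 2 * s * Re (cinner x y) + s\<^sup>2 * (norm y)\<^sup>2)"
    by (simp add: cinner_self_norm complex_add_cnj)
  finally show ?thesis using of_real_eq_iff by blast
qed

lemma abs_Re_cinner_le: "\<bar>Re (cinner x y)\<bar> \<le> norm x * norm (y::'a::complex_inner)"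
proof -
  have "(Re (cinner x y))\<^sup>2 \<le> (norm x)\<^sup>2 * (norm y)\<^sup>2"
    by (rule quadratic_nonneg_discriminant) (simp_all flip: power2_norm_add_scaleR)
  then have "\<bar>Re (cinner x y)\<bar> \<le> \<bar>norm x * norm y\<bar>"
    by (simp only: abs_le_square_iff power_mult_distrib)
  then show ?thesis by simp
qed

lemma norm_cinner_le: "cmod (cinner x y) \<le> norm x * norm (y::'a::complex_inner)"
proof (cases "cinner x y = 0")
  case False
  define c where "c = cnj (cinner x y) / cmod (cinner x y)"
  \<comment> \<open>rotating y by the phase c makes the inner product real\<close>
  have "cinner x (c *\<^sub>C y) = complex_of_real (cmod (cinner x y))"
    using False complex_norm_square[of "cinner x y"]
    by (simp add: c_def cinner_scaleC_right field_simps power2_eq_square)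
  then have "cmod (cinner x y) \<le> norm x * norm (c *\<^sub>C y)"
    using abs_Re_cinner_le[of x "c *\<^sub>C y"] by simp
  also have "norm (c *\<^sub>C y) = norm y"
    using False by (simp add: norm_scaleC c_def norm_divide)
  finally show ?thesis .
qed simp

lemma bounded_bilinear_scaleC: "bounded_bilinear (\<lambda>(a::complex) (x::'a::complex_inner). a *\<^sub>C x)"
proof
  fix a a' :: complex and b b' :: 'a and r :: real
  show "(a + a') *\<^sub>C b = a *\<^sub>C b + a' *\<^sub>C b" by (rule scaleC_add_left)
  show "a *\<^sub>C (b + b') = a *\<^sub>C b + a *\<^sub>C b'" by (rule scaleC_add_right)
  show "(r *\<^sub>R a) *\<^sub>C b = r *\<^sub>R (a *\<^sub>C b)"
    by (simp add: scaleR_scaleC scaleC_scaleC scaleR_conv_of_real)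
  show "a *\<^sub>C (r *\<^sub>R b) = r *\<^sub>R (a *\<^sub>C b)"
    by (simp add: scaleR_scaleC scaleC_scaleC mult.commute)
  show "\<exists>K. \<forall>a b. norm (a *\<^sub>C (b::'a)) \<le> norm a * norm b * K"
    by (rule exI[of _ 1]) (simp add: norm_scaleC)
qed

lemma bounded_bilinear_cinner: "bounded_bilinear (cinner :: 'a::complex_inner \<Rightarrow> 'a \<Rightarrow> complex)"
proof
  fix a a' b b' :: 'a and r :: real
  show "cinner (a + a') b = cinner a b + cinner a' b" by (rule cinner_add_left)
  show "cinner a (b + b') = cinner a b + cinner a b'" by (rule cinner_add_right)
  show "cinner (r *\<^sub>R a) b = r *\<^sub>R (cinner a b)"
    by (simp add: scaleR_scaleC cinner_scaleC_left scaleR_conv_of_real)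
  show "cinner a (r *\<^sub>R b) = r *\<^sub>R (cinner a b)"
    by (simp add: scaleR_scaleC cinner_scaleC_right scaleR_conv_of_real)
  show "\<exists>K. \<forall>a b. norm (cinner a (b::'a)) \<le> norm a * norm b * K"
    by (rule exI[of _ 1]) (simp add: norm_cinner_le)
qed

lemma borel_measurable_scaleC [measurable (raw)]:
  fixes f :: "'b \<Rightarrow> 'a::{complex_inner, second_countable_topology}"
  assumes "\<phi> \<in> borel_measurable M" "f \<in> borel_measurable M"
  shows "(\<lambda>t. \<phi> t *\<^sub>C f t) \<in> borel_measurable M"
  by (rule borel_measurable_continuous_Pair[OF assms],
      rule bounded_bilinear.continuous_on[OF bounded_bilinear_scaleC]) (intro continuous_intros)+

lemma borel_measurable_cinner [measurable (raw)]:
  fixes f :: "'b \<Rightarrow> 'a::{complex_inner, second_countable_topology}"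
  assumes "f \<in> borel_measurable M" "g \<in> borel_measurable M"
  shows "(\<lambda>t. cinner (f t) (g t)) \<in> borel_measurable M"
  by (rule borel_measurable_continuous_Pair[OF assms],
      rule bounded_bilinear.continuous_on[OF bounded_bilinear_cinner]) (intro continuous_intros)+

lemma L2I: "f \<in> borel_measurable Rplus \<Longrightarrow> integrable Rplus (\<lambda>t. (norm (f t))\<^sup>2) \<Longrightarrow> f \<in> L2"
  by (simp add: L2_def)

lemma L2_borel_measurable: "f \<in> L2 \<Longrightarrow> f \<in> borel_measurable Rplus"
  by (simp add: L2_def)

lemma L2_integrable_power2: "f \<in> L2 \<Longrightarrow> integrable Rplus (\<lambda>t. (norm (f t))\<^sup>2)"
  by (simp add: L2_def)

lemma power2_norm_add_le: "(norm (a + b))\<^sup>2 \<le> 2 * (norm a)\<^sup>2 + 2 * (norm (b::'a::real_normed_vector))\<^sup>2"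
proof -
  have "(norm (a + b))\<^sup>2 \<le> (norm a + norm b)\<^sup>2"
    by (simp add: power_mono norm_triangle_ineq)
  also have "\<dots> \<le> 2 * (norm a)\<^sup>2 + 2 * (norm b)\<^sup>2"
    using sum_squares_ge_zero[of "norm a - norm b" 0] by (simp add: power2_eq_square algebra_simps)
  finally show ?thesis .
qed

lemma L2_add:
  fixes f g :: "real \<Rightarrow> 'a::{complex_inner, second_countable_topology}"
  assumes "f \<in> L2" "g \<in> L2"
  shows "(\<lambda>t. f t + g t) \<in> L2"
proof (rule L2I)
  note [measurable] = assms[THEN L2_borel_measurable]
  show "(\<lambda>t. f t + g t) \<in> borel_measurable Rplus" by measurable
  have "integrable Rplus (\<lambda>t. 2 * (norm (f t))\<^sup>2 + 2 * (norm (g t))\<^sup>2)"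
    using assms by (intro Bochner_Integration.integrable_add integrable_mult_right L2_integrable_power2)
  then show "integrable Rplus (\<lambda>t. (norm (f t + g t))\<^sup>2)"
    by (rule Bochner_Integration.integrable_bound)
       (measurable, simp add: power2_norm_add_le)
qed

lemma L2_scaleC_bounded:
  fixes f :: "real \<Rightarrow> 'a::{complex_inner, second_countable_topology}"
  assumes "f \<in> L2" "\<phi> \<in> borel_measurable Rplus" "\<And>t. cmod (\<phi> t) \<le> B"
  shows "(\<lambda>t. \<phi> t *\<^sub>C f t) \<in> L2"
proof (rule L2I)
  note [measurable] = L2_borel_measurable[OF assms(1)] assms(2)
  show "(\<lambda>t. \<phi> t *\<^sub>C f t) \<in> borel_measurable Rplus" by measurable
  have "integrable Rplus (\<lambda>t. B\<^sup>2 * (norm (f t))\<^sup>2)"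
    using L2_integrable_power2[OF assms(1)] by simp
  moreover have "(\<lambda>t. (norm (\<phi> t *\<^sub>C f t))\<^sup>2) \<in> borel_measurable Rplus" by measurable
  moreover have "cmod (\<phi> t) * norm (f t) \<le> B * norm (f t)" for t
    using assms(3) by (simp add: mult_right_mono)
  then have "(cmod (\<phi> t) * norm (f t))\<^sup>2 \<le> (B * norm (f t))\<^sup>2" for t
    by (simp add: power_mono)
  then have "AE t in Rplus. norm ((norm (\<phi> t *\<^sub>C f t))\<^sup>2) \<le> norm (B\<^sup>2 * (norm (f t))\<^sup>2)"
    by (simp add: norm_scaleC power_mult_distrib)
  ultimately show "integrable Rplus (\<lambda>t. (norm (\<phi> t *\<^sub>C f t))\<^sup>2)"
    by (rule Bochner_Integration.integrable_bound)
qed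

lemma L2_scaleR:
  fixes f :: "real \<Rightarrow> 'a::{complex_inner, second_countable_topology}"
  shows "f \<in> L2 \<Longrightarrow> (\<lambda>t. r *\<^sub>R f t) \<in> L2"
  using L2_scaleC_bounded[of f "\<lambda>_. complex_of_real r" "\<bar>r\<bar>"] by (simp add: scaleR_scaleC)

lemma L2_diff:
  fixes f g :: "real \<Rightarrow> 'a::{complex_inner, second_countable_topology}"
  assumes "f \<in> L2" "g \<in> L2"
  shows "(\<lambda>t. f t - g t) \<in> L2"
  using L2_add[OF assms(1) L2_scaleR[OF assms(2), of "- 1"]] by simp

lemma integrable_cinner_L2:
  fixes f g :: "real \<Rightarrow> 'a::{complex_inner, second_countable_topology}"
  assumes "f \<in> L2" "g \<in> L2"
  shows "integrable Rplus (\<lambda>t. cinner (f t) (g t))"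
proof (rule Bochner_Integration.integrable_bound[of _ "\<lambda>t. (norm (f t))\<^sup>2 + (norm (g t))\<^sup>2"])
  show "integrable Rplus (\<lambda>t. (norm (f t))\<^sup>2 + (norm (g t))\<^sup>2)"
    using assms by (intro Bochner_Integration.integrable_add L2_integrable_power2)
  note [measurable] = assms[THEN L2_borel_measurable]
  show "(\<lambda>t. cinner (f t) (g t)) \<in> borel_measurable Rplus" by measurable
  have "norm (f t) * norm (g t) \<le> (norm (f t))\<^sup>2 + (norm (g t))\<^sup>2" for t
  proof -
    have "0 \<le> (norm (f t) - norm (g t))\<^sup>2" "0 \<le> norm (f t) * norm (g t)" by simp_all
    then show ?thesis unfolding power2_diff by linarith
  qed
  then show "AE t in Rplus. norm (cinner (f t) (g t)) \<le> norm ((norm (f t))\<^sup>2 + (norm (g t))\<^sup>2)"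
    by (intro AE_I2) (simp add: order_trans[OF norm_cinner_le])
qed

definition L2sq :: "(real \<Rightarrow> 'a::complex_inner) \<Rightarrow> real" where
  "L2sq f = (\<integral>t. (norm (f t))\<^sup>2 \<partial>Rplus)"

lemma L2sq_nonneg: "0 \<le> L2sq f"
  unfolding L2sq_def by (rule integral_nonneg_AE) auto

lemma L2norm_eq_sqrt_L2sq: "L2norm f = sqrt (L2sq f)"
  by (simp add: L2norm_def L2sq_def)

lemma L2sq_minus_commute: "L2sq (\<lambda>t. f t - g t) = L2sq (\<lambda>t. g t - f t)"
  by (simp add: L2sq_def norm_minus_commute)

lemma AE_zero_if_L2sq_zero:
  fixes u :: "real \<Rightarrow> 'a::{complex_inner, second_countable_topology}"
  assumes "u \<in> L2" "L2sq u = 0"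
  shows "AE t in Rplus. u t = 0"
proof -
  have "AE t in Rplus. (norm (u t))\<^sup>2 = 0"
    using integral_nonneg_eq_0_iff_AE[OF L2_integrable_power2[OF assms(1)]] assms(2)
    unfolding L2sq_def by simp
  then show ?thesis by eventually_elim simp
qed

lemma Kinner_diff_right:
  fixes f g h :: "real \<Rightarrow> 'a::{complex_inner, second_countable_topology}"
  shows "f \<in> L2 \<Longrightarrow> g \<in> L2 \<Longrightarrow> h \<in> L2 \<Longrightarrow> Kinner f (\<lambda>t. g t - h t) = Kinner f g - Kinner f h"
  unfolding Kinner_def cinner_diff_right
  by (rule Bochner_Integration.integral_diff; rule integrable_cinner_L2)

lemma Kinner_diff_left:
  fixes f g h :: "real \<Rightarrow> 'a::{complex_inner, second_countable_topology}"
  shows "f \<in> L2 \<Longrightarrow> g \<in> L2 \<Longrightarrow> h \<in> L2 \<Longrightarrow> Kinner (\<lambda>t. g t - h t) f = Kinner g f - Kinner h f"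
  unfolding Kinner_def cinner_diff_left
  by (rule Bochner_Integration.integral_diff; rule integrable_cinner_L2)

lemma Kinner_scaleC_right: "Kinner f (\<lambda>t. c *\<^sub>C g t) = c * Kinner f g"
  unfolding Kinner_def cinner_scaleC_right by simp

lemma Kinner_self: "Kinner f f = complex_of_real (L2sq f)"
  unfolding Kinner_def L2sq_def cinner_self_norm by (simp del: of_real_power)

lemma L2sq_add_scaleR:
  fixes u v :: "real \<Rightarrow> 'a::{complex_inner, second_countable_topology}"
  assumes "u \<in> L2" "v \<in> L2"
  shows "L2sq (\<lambda>t. u t + s *\<^sub>R v t) = L2sq u + 2 * s * Re (Kinner u v) + s\<^sup>2 * L2sq v"
proof -
  have Re: "integrable Rplus (\<lambda>t. Re (cinner (u t) (v t)))"
    "(\<integral>t. Re (cinner (u t) (v t)) \<partial>Rplus) = Re (Kinner u v)"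
    using integrable_cinner_L2[OF assms] unfolding Kinner_def by auto
  show ?thesis
    unfolding L2sq_def power2_norm_add_scaleR
    using L2_integrable_power2[OF assms(1)] L2_integrable_power2[OF assms(2)] Re
    by (simp add: Bochner_Integration.integral_add)
qed

lemma Re_Kinner_Cauchy_Schwarz:
  fixes u v :: "real \<Rightarrow> 'a::{complex_inner, second_countable_topology}"
  assumes "u \<in> L2" "v \<in> L2"
  shows "(Re (Kinner u v))\<^sup>2 \<le> L2sq u * L2sq v"
  by (rule quadratic_nonneg_discriminant)
     (simp_all add: L2sq_nonneg flip: L2sq_add_scaleR[OF assms])

lemma tendsto_L2sq:
  fixes U :: "nat \<Rightarrow> real \<Rightarrow> 'a::{complex_inner, second_countable_topology}"
  assumes L2: "u \<in> L2" "\<And>n. U n \<in> L2" and lim: "(\<lambda>n. L2sq (\<lambda>t. U n t - u t)) \<longlonglongrightarrow> 0"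
  shows "(\<lambda>n. L2sq (U n)) \<longlonglongrightarrow> L2sq u"
proof -
  define W where "W n t = U n t - u t" for n t
  have W: "W n \<in> L2" for n unfolding W_def by (intro L2_diff L2)
  have W0: "(\<lambda>n. L2sq (W n)) \<longlonglongrightarrow> 0" using lim unfolding W_def .
  have expand: "L2sq (U n) = L2sq u + 2 * Re (Kinner u (W n)) + L2sq (W n)" for n
    using L2sq_add_scaleR[OF L2(1) W, of 1] by (simp add: W_def)
  have "norm (Re (Kinner u (W n))) \<le> sqrt (L2sq u) * sqrt (L2sq (W n))" for n
    using real_sqrt_le_mono[OF Re_Kinner_Cauchy_Schwarz[OF L2(1) W, of n]]
    by (simp add: real_sqrt_mult)
  moreover have "(\<lambda>n. sqrt (L2sq u) * sqrt (L2sq (W n))) \<longlonglongrightarrow> 0"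
    using tendsto_mult_left[OF tendsto_real_sqrt[OF W0], of "sqrt (L2sq u)"] by simp
  ultimately have "(\<lambda>n. Re (Kinner u (W n))) \<longlonglongrightarrow> 0"
    by (rule Lim_null_comparison[OF always_eventually[OF allI]])
  from tendsto_add[OF tendsto_add[OF tendsto_const tendsto_mult_left[OF this]] W0]
  show ?thesis by (simp add: expand)
qed

lemma L2sq_midpoint:
  fixes a a' x :: "real \<Rightarrow> 'a::{complex_inner, second_countable_topology}"
  assumes L2: "a \<in> L2" "a' \<in> L2" "x \<in> L2"
  shows "L2sq (\<lambda>t. a' t - a t) + 4 * L2sq (\<lambda>t. x t - (1/2) *\<^sub>R (a t + a' t))
       = 2 * L2sq (\<lambda>t. x t - a t) + 2 * L2sq (\<lambda>t. x t - a' t)"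
proof -
  \<comment> \<open>the parallelogram law for \<open>x - a\<close> and \<open>x - a'\<close>, integrated\<close>
  have pointwise: "(norm (q - p))\<^sup>2 + 4 * (norm (z - (1/2) *\<^sub>R (p + q)))\<^sup>2
                = 2 * (norm (z - p))\<^sup>2 + 2 * (norm (z - q))\<^sup>2" for p q z :: 'a
  proof -
    have "(z - p) + 1 *\<^sub>R (z - q) = 2 *\<^sub>R (z - (1/2) *\<^sub>R (p + q))"
      by (simp add: algebra_simps scaleR_2)
    then have sum: "(norm ((z - p) + 1 *\<^sub>R (z - q)))\<^sup>2 = 4 * (norm (z - (1/2) *\<^sub>R (p + q)))\<^sup>2"
      by (simp add: power_mult_distrib)
    have diff: "(z - p) + (- 1) *\<^sub>R (z - q) = q - p" by simp
    show ?thesis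
      using power2_norm_add_scaleR[of "z - p" 1 "z - q"] power2_norm_add_scaleR[of "z - p" "- 1" "z - q"]
      unfolding sum diff by simp
  qed
  have int: "integrable Rplus (\<lambda>t. (norm (a' t - a t))\<^sup>2)"
    "integrable Rplus (\<lambda>t. (norm (x t - (1/2) *\<^sub>R (a t + a' t)))\<^sup>2)"
    "integrable Rplus (\<lambda>t. (norm (x t - a t))\<^sup>2)" "integrable Rplus (\<lambda>t. (norm (x t - a' t))\<^sup>2)"
    by (intro L2_integrable_power2 L2_diff L2_scaleR L2_add L2)+
  have "L2sq (\<lambda>t. a' t - a t) + 4 * L2sq (\<lambda>t. x t - (1/2) *\<^sub>R (a t + a' t))
      = (\<integral>t. (norm (a' t - a t))\<^sup>2 + 4 * (norm (x t - (1/2) *\<^sub>R (a t + a' t)))\<^sup>2 \<partial>Rplus)"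
    unfolding L2sq_def using int by simp
  also have "\<dots> = (\<integral>t. 2 * (norm (x t - a t))\<^sup>2 + 2 * (norm (x t - a' t))\<^sup>2 \<partial>Rplus)"
    by (simp only: pointwise)
  also have "\<dots> = 2 * L2sq (\<lambda>t. x t - a t) + 2 * L2sq (\<lambda>t. x t - a' t)"
    unfolding L2sq_def using int by simp
  finally show ?thesis .
qed

section \<open>Completeness of \<open>L2\<close>\<close>

lemma sum_power_half_le: "(\<Sum>i = n..<m. (1/2::real)^i) \<le> 2 * (1/2)^n"
proof (cases "n \<le> m")
  case True
  have "(\<Sum>i = n..<m. (1/2::real)^i) = 2 * ((1/2)^n - (1/2)^m)"
    using True by (induction m rule: dec_induct) (simp_all add: sum.atLeastLessThan_Suc)
  then show ?thesis by simp
qed simp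

lemma power2_norm_diff_le_weighted_increments:
  fixes F :: "nat \<Rightarrow> 'a::real_normed_vector"
  assumes summable: "summable (\<lambda>i. 2^i * (norm (F (Suc i) - F i))\<^sup>2)" and "n \<le> m"
  shows "(norm (F m - F n))\<^sup>2 \<le> 2 * (1/2)^n * (\<Sum>i. 2^i * (norm (F (Suc i) - F i))\<^sup>2)"
proof -
  define d where "d i = norm (F (Suc i) - F i)" for i
  have "norm (F m - F n) \<le> (\<Sum>i = n..<m. d i)"
    using sum_Suc_diff'[OF \<open>n \<le> m\<close>, of F] unfolding d_def by (metis norm_sum)
  then have "(norm (F m - F n))\<^sup>2 \<le> (\<Sum>i = n..<m. d i)\<^sup>2" by (simp add: power_mono)
  \<comment> \<open>Cauchy--Schwarz with the weights \<open>2^-i\<close> and \<open>2^i\<close>\<close>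
  also have "(\<Sum>i = n..<m. d i) = (\<Sum>i = n..<m. sqrt ((1/2)^i) * (sqrt (2^i) * d i))"
    by (simp add: real_sqrt_mult[symmetric] power_mult_distrib[symmetric] mult.assoc[symmetric])
  also have "(\<dots>)\<^sup>2 \<le> (\<Sum>i = n..<m. (sqrt ((1/2)^i))\<^sup>2) * (\<Sum>i = n..<m. (sqrt (2^i) * d i)\<^sup>2)"
    by (rule Cauchy_Schwarz_ineq_sum)
  also have "\<dots> = (\<Sum>i = n..<m. (1/2)^i) * (\<Sum>i = n..<m. 2^i * (d i)\<^sup>2)"
    by (simp add: power_mult_distrib)
  also have "\<dots> \<le> (2 * (1/2)^n) * (\<Sum>i. 2^i * (d i)\<^sup>2)"
  proof (rule mult_mono)
    show "(\<Sum>i = n..<m. 2^i * (d i)\<^sup>2) \<le> (\<Sum>i. 2^i * (d i)\<^sup>2)"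
      by (rule sum_le_suminf) (use summable in \<open>auto simp: d_def\<close>)
  qed (auto simp: sum_power_half_le intro: sum_nonneg)
  finally show ?thesis unfolding d_def .
qed

lemma Cauchy_if_norm_diff_le:
  fixes X :: "nat \<Rightarrow> 'a::real_normed_vector"
  assumes bound: "\<And>n m. n \<le> m \<Longrightarrow> norm (X m - X n) \<le> B n" and "B \<longlonglongrightarrow> 0"
  shows "Cauchy X"
proof (rule CauchyI)
  fix e :: real assume "0 < e"
  then obtain N where N: "\<And>n. n \<ge> N \<Longrightarrow> B n < e"
    using order_tendstoD(2)[OF \<open>B \<longlonglongrightarrow> 0\<close>] by (auto simp: eventually_sequentially)
  have "norm (X m - X n) < e" if "m \<ge> N" "n \<ge> N" for m n
    using bound[of n m] bound[of m n] N[OF that(1)] N[OF that(2)]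
    by (cases "n \<le> m") (auto simp: norm_minus_commute)
  then show "\<exists>M. \<forall>m\<ge>M. \<forall>n\<ge>M. norm (X m - X n) < e" by blast
qed

lemma AE_Cauchy_imp_AE_tendsto:
  fixes F :: "nat \<Rightarrow> 'a \<Rightarrow> 'b::{complete_space, metric_space}"
  assumes [measurable]: "\<And>n. F n \<in> borel_measurable M" and "AE x in M. Cauchy (\<lambda>n. F n x)"
  obtains f where "f \<in> borel_measurable M" "AE x in M. (\<lambda>n. F n x) \<longlonglongrightarrow> f x"
proof -
  obtain N where N: "{x \<in> space M. \<not> Cauchy (\<lambda>n. F n x)} \<subseteq> N" "emeasure M N = 0"
    and [measurable]: "N \<in> sets M"
    by (rule AE_E[OF assms(2)])
  have null: "N \<in> null_sets M" using N(2) by (simp add: null_setsI)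
  define f where "f x = (if x \<in> N then F 0 x else lim (\<lambda>n. F n x))" for x
  have lim: "(\<lambda>n. if x \<in> N then F 0 x else F n x) \<longlonglongrightarrow> f x" if "x \<in> space M" for x
    using N(1) that unfolding f_def by (auto simp: Cauchy_convergent_iff convergent_LIMSEQ_iff)
  have "f \<in> borel_measurable M"
  proof (rule borel_measurable_LIMSEQ_metric[OF _ lim])
    show "(\<lambda>x. if x \<in> N then F 0 x else F i x) \<in> borel_measurable M" for i by measurable
  qed
  moreover have "AE x in M. (\<lambda>n. F n x) \<longlonglongrightarrow> f x"
  proof (rule AE_I'[OF null])
    have "(\<lambda>n. F n x) \<longlonglongrightarrow> f x" if "x \<in> space M" "x \<notin> N" for x
      using lim[OF that(1)] that(2) by simp
    then show "{x \<in> space M. \<not> (\<lambda>n. F n x) \<longlonglongrightarrow> f x} \<subseteq> N" by blast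
  qed
  ultimately show ?thesis by (rule that)
qed

lemma AE_summable_if_summable_integrals:
  fixes a :: "nat \<Rightarrow> 'b \<Rightarrow> real"
  assumes int: "\<And>i. integrable M (a i)" and nonneg: "\<And>i x. 0 \<le> a i x"
    and summable: "summable (\<lambda>i. integral\<^sup>L M (a i))"
  shows "AE x in M. summable (\<lambda>i. a i x)"
proof -
  have [measurable]: "a i \<in> borel_measurable M" for i using int by simp
  have "(\<integral>\<^sup>+x. (\<Sum>i. ennreal (a i x)) \<partial>M) = (\<Sum>i. \<integral>\<^sup>+x. ennreal (a i x) \<partial>M)"
    by (rule nn_integral_suminf) measurable
  also have "\<dots> = ennreal (\<Sum>i. integral\<^sup>L M (a i))"
    using nn_integral_eq_integral[OF int] nonneg integral_nonneg_AE
    by (simp add: suminf_ennreal2[OF _ summable])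
  finally have "(\<integral>\<^sup>+x. (\<Sum>i. ennreal (a i x)) \<partial>M) \<noteq> \<infinity>" by simp
  then have "AE x in M. (\<Sum>i. ennreal (a i x)) \<noteq> \<infinity>"
    by (intro nn_integral_PInf_AE) auto
  then show ?thesis
    by eventually_elim (auto intro: summable_suminf_not_top simp: nonneg)
qed

lemma L2_fast_sequence_dominated:
  fixes F :: "nat \<Rightarrow> real \<Rightarrow> 'a::{complex_inner, second_countable_topology}"
  assumes L2: "\<And>n. F n \<in> L2" and fast: "\<And>n. L2sq (\<lambda>t. F (Suc n) t - F n t) \<le> C * (1/4)^n"
  obtains R where "integrable Rplus R"
    "AE t in Rplus. \<forall>n m. n \<le> m \<longrightarrow> (norm (F m t - F n t))\<^sup>2 \<le> 2 * (1/2)^n * R t"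
proof
  define a where "a i t = 2^i * (norm (F (Suc i) t - F i t))\<^sup>2" for i t
  have nonneg: "0 \<le> a i t" for i t unfolding a_def by simp
  have int: "integrable Rplus (a i)" for i
    unfolding a_def by (intro integrable_mult_right L2_integrable_power2 L2_diff L2)
  have integral_le: "integral\<^sup>L Rplus (a i) \<le> C * (1/2)^i" for i
  proof -
    have "integral\<^sup>L Rplus (a i) = 2^i * L2sq (\<lambda>t. F (Suc i) t - F i t)"
      unfolding a_def L2sq_def by simp
    also have "\<dots> \<le> 2^i * (C * (1/4)^i)" using fast[of i] by simp
    also have "\<dots> = C * (2^i * (1/4)^i)" by simp
    also have "(2::real)^i * (1/4)^i = (1/2)^i" by (simp flip: power_mult_distrib)
    finally show ?thesis .
  qed
  have "summable (\<lambda>i. C * (1/2::real)^i)" by (intro summable_mult summable_geometric) simp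
  moreover have "norm (integral\<^sup>L Rplus (a i)) \<le> C * (1/2)^i" if "i \<ge> 0" for i
    using integral_le[of i] integral_nonneg_AE[of "a i" Rplus] nonneg by simp
  ultimately have summable_integrals: "summable (\<lambda>i. integral\<^sup>L Rplus (a i))"
    by (rule summable_comparison_test')
  then have summable: "AE t in Rplus. summable (\<lambda>i. a i t)"
    by (rule AE_summable_if_summable_integrals[OF int nonneg])
  show "integrable Rplus (\<lambda>t. \<Sum>i. a i t)"
    using summable summable_integrals
    by (intro integrable_suminf int) (simp_all add: nonneg)
  show "AE t in Rplus. \<forall>n m. n \<le> m \<longrightarrow> (norm (F m t - F n t))\<^sup>2 \<le> 2 * (1/2)^n * (\<Sum>i. a i t)"
    using summable
  proof eventually_elim
    case (elim t)
    then show ?case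
      using power2_norm_diff_le_weighted_increments[of "\<lambda>i. F i t"] unfolding a_def by simp
  qed
qed

lemma L2_limit_if_dominated:
  fixes F :: "nat \<Rightarrow> real \<Rightarrow> 'a::{complex_inner, second_countable_topology}"
  assumes L2: "\<And>n. F n \<in> L2" and [measurable]: "f \<in> borel_measurable Rplus"
    and R: "integrable Rplus R" and c: "c \<longlonglongrightarrow> 0"
    and bound: "AE t in Rplus. \<forall>n. (norm (F n t - f t))\<^sup>2 \<le> c n * R t"
  shows "f \<in> L2" "(\<lambda>n. L2sq (\<lambda>t. F n t - f t)) \<longlonglongrightarrow> 0"
proof -
  note [measurable] = L2_borel_measurable[OF L2]
  have diff_L2: "(\<lambda>t. F n t - f t) \<in> L2" for n
  proof (rule L2I)
    show "(\<lambda>t. F n t - f t) \<in> borel_measurable Rplus" by measurable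
    have "integrable Rplus (\<lambda>t. c n * R t)" using R by simp
    moreover have "(\<lambda>t. (norm (F n t - f t))\<^sup>2) \<in> borel_measurable Rplus" by measurable
    moreover have "AE t in Rplus. norm ((norm (F n t - f t))\<^sup>2) \<le> norm (c n * R t)"
      using bound by eventually_elim (simp add: order_trans[OF _ abs_ge_self])
    ultimately show "integrable Rplus (\<lambda>t. (norm (F n t - f t))\<^sup>2)"
      by (rule Bochner_Integration.integrable_bound)
  qed
  show "f \<in> L2" using L2_diff[OF L2 diff_L2[of 0], of 0] by simp
  show "(\<lambda>n. L2sq (\<lambda>t. F n t - f t)) \<longlonglongrightarrow> 0"
  proof (rule tendsto_sandwich[of "\<lambda>_. 0" _ _ "\<lambda>n. c n * integral\<^sup>L Rplus R"])
    have "L2sq (\<lambda>t. F n t - f t) \<le> integral\<^sup>L Rplus (\<lambda>t. c n * R t)" for n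
      unfolding L2sq_def using bound
      by (intro integral_mono_AE L2_integrable_power2[OF diff_L2]) (use R in auto)
    then show "\<forall>\<^sub>F n in sequentially. L2sq (\<lambda>t. F n t - f t) \<le> c n * integral\<^sup>L Rplus R"
      by simp
    show "(\<lambda>n. c n * integral\<^sup>L Rplus R) \<longlonglongrightarrow> 0"
      by (rule tendsto_mult_left_zero[OF c])
  qed (simp_all add: L2sq_nonneg)
qed

lemma L2_complete:
  fixes F :: "nat \<Rightarrow> real \<Rightarrow> 'a::{complex_inner, complete_space, second_countable_topology}"
  assumes L2: "\<And>n. F n \<in> L2" and fast: "\<And>n. L2sq (\<lambda>t. F (Suc n) t - F n t) \<le> C * (1/4)^n"
  obtains f where "f \<in> L2" "(\<lambda>n. L2sq (\<lambda>t. F n t - f t)) \<longlonglongrightarrow> 0"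
proof -
  obtain R where R: "integrable Rplus R"
    and bound: "AE t in Rplus. \<forall>n m. n \<le> m \<longrightarrow> (norm (F m t - F n t))\<^sup>2 \<le> 2 * (1/2)^n * R t"
    using L2_fast_sequence_dominated[OF L2 fast] by blast
  have c: "(\<lambda>n. 2 * (1/2::real)^n) \<longlonglongrightarrow> 0"
    using tendsto_mult_right_zero[OF LIMSEQ_power_zero[of "1/2::real"]] by (simp add: mult.commute)
  have "AE t in Rplus. Cauchy (\<lambda>n. F n t)"
    using bound
  proof eventually_elim
    case (elim t)
    have "(\<lambda>n. sqrt (2 * (1/2)^n * R t)) \<longlonglongrightarrow> sqrt (0 * R t)"
      by (intro tendsto_intros c)
    then show ?case
      using elim by (intro Cauchy_if_norm_diff_le[of _ "\<lambda>n. sqrt (2 * (1/2)^n * R t)"])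
        (auto simp: real_le_rsqrt)
  qed
  then obtain f where [measurable]: "f \<in> borel_measurable Rplus"
    and lim: "AE t in Rplus. (\<lambda>n. F n t) \<longlonglongrightarrow> f t"
    by (rule AE_Cauchy_imp_AE_tendsto[OF L2_borel_measurable[OF L2]])
  have "AE t in Rplus. \<forall>n. (norm (F n t - f t))\<^sup>2 \<le> 2 * (1/2)^n * R t"
    using bound lim
  proof eventually_elim
    case (elim t)
    show ?case
    proof
      fix n
      have "(\<lambda>m. (norm (F m t - F n t))\<^sup>2) \<longlonglongrightarrow> (norm (f t - F n t))\<^sup>2"
        using elim(2) by (intro tendsto_intros)
      then have "(norm (f t - F n t))\<^sup>2 \<le> 2 * (1/2)^n * R t"
        by (rule LIMSEQ_le_const2) (use elim(1) in blast)
      then show "(norm (F n t - f t))\<^sup>2 \<le> 2 * (1/2)^n * R t" by (simp add: norm_minus_commute)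
    qed
  qed
  from L2_limit_if_dominated[OF L2 _ R c this] show ?thesis
    using that by simp
qed

section \<open>Closed operators equal their double adjoint\<close>

lemma is_operator_L2: "is_operator G \<Longrightarrow> (f, g) \<in> G \<Longrightarrow> f \<in> L2 \<and> g \<in> L2"
  unfolding is_operator_def by blast

lemma is_operator_add:
  "is_operator G \<Longrightarrow> (f, g) \<in> G \<Longrightarrow> (f', g') \<in> G \<Longrightarrow> ((\<lambda>t. f t + f' t), (\<lambda>t. g t + g' t)) \<in> G"
  unfolding is_operator_def by blast

lemma is_operator_scaleC:
  "is_operator G \<Longrightarrow> (f, g) \<in> G \<Longrightarrow> ((\<lambda>t. c *\<^sub>C f t), (\<lambda>t. c *\<^sub>C g t)) \<in> G"
  unfolding is_operator_def mulf_def by blast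

lemma is_operator_scaleR:
  "is_operator G \<Longrightarrow> (f, g) \<in> G \<Longrightarrow> ((\<lambda>t. r *\<^sub>R f t), (\<lambda>t. r *\<^sub>R g t)) \<in> G"
  using is_operator_scaleC[of G f g "complex_of_real r"] by (simp add: scaleR_scaleC)

lemma is_operator_nonempty: "is_operator G \<Longrightarrow> G \<noteq> {}"
  unfolding is_operator_def by blast

lemma is_operator_AE_cong:
  "is_operator G \<Longrightarrow> (f, g) \<in> G \<Longrightarrow> f' \<in> L2 \<Longrightarrow> g' \<in> L2 \<Longrightarrow>
   (AE t in Rplus. f' t = f t) \<Longrightarrow> (AE t in Rplus. g' t = g t) \<Longrightarrow> (f', g') \<in> G"
  unfolding is_operator_def by blast

definition L2sq_pair :: "(real \<Rightarrow> 'a::complex_inner) \<times> (real \<Rightarrow> 'a) \<Rightarrow> (real \<Rightarrow> 'a) \<times> (real \<Rightarrow> 'a) \<Rightarrow> real"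
  where "L2sq_pair p q = L2sq (\<lambda>t. fst p t - fst q t) + L2sq (\<lambda>t. snd p t - snd q t)"

lemma L2sq_pair_nonneg: "0 \<le> L2sq_pair p q"
  by (simp add: L2sq_pair_def L2sq_nonneg add_nonneg_nonneg)

lemma tendsto_L2sq_pair:
  fixes A B :: "nat \<Rightarrow> real \<Rightarrow> 'a::{complex_inner, second_countable_topology}"
  assumes L2: "x \<in> L2" "y \<in> L2" "a \<in> L2" "b \<in> L2" "\<And>n. A n \<in> L2" "\<And>n. B n \<in> L2"
    and lim: "(\<lambda>n. L2sq (\<lambda>t. A n t - a t)) \<longlonglongrightarrow> 0" "(\<lambda>n. L2sq (\<lambda>t. B n t - b t)) \<longlonglongrightarrow> 0"
  shows "(\<lambda>n. L2sq_pair (x, y) (A n, B n)) \<longlonglongrightarrow> L2sq_pair (x, y) (a, b)"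
proof -
  have "(\<lambda>n. L2sq (\<lambda>t. z t - Z n t)) \<longlonglongrightarrow> L2sq (\<lambda>t. z t - c t)"
    if "z \<in> L2" "c \<in> L2" "\<And>n. Z n \<in> L2" "(\<lambda>n. L2sq (\<lambda>t. Z n t - c t)) \<longlonglongrightarrow> 0"
    for z c :: "real \<Rightarrow> 'a" and Z
    using that by (intro tendsto_L2sq L2_diff) (simp_all add: L2sq_minus_commute)
  from tendsto_add[OF this[OF L2(1,3,5) lim(1)] this[OF L2(2,4,6) lim(2)]]
  show ?thesis by (simp add: L2sq_pair_def)
qed

lemma L2sq_pair_midpoint_le:
  fixes G :: "((real \<Rightarrow> 'a::{complex_inner, second_countable_topology}) \<times> (real \<Rightarrow> 'a)) set"
  assumes op: "is_operator G" and p: "(a, b) \<in> G" and p': "(a', b') \<in> G" and "x \<in> L2" "y \<in> L2"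
    and lower: "\<And>q. q \<in> G \<Longrightarrow> d \<le> L2sq_pair (x, y) q"
  shows "L2sq_pair (a', b') (a, b) \<le> 2 * L2sq_pair (x, y) (a, b) + 2 * L2sq_pair (x, y) (a', b') - 4 * d"
proof -
  have L2: "a \<in> L2" "b \<in> L2" "a' \<in> L2" "b' \<in> L2"
    using is_operator_L2[OF op p] is_operator_L2[OF op p'] by auto
  have "((\<lambda>t. (1/2) *\<^sub>R (a t + a' t)), (\<lambda>t. (1/2) *\<^sub>R (b t + b' t))) \<in> G"
    by (intro is_operator_scaleR[OF op] is_operator_add[OF op] p p')
  from lower[OF this] show ?thesis
    using L2sq_midpoint[of a a' x] L2sq_midpoint[of b b' y] L2 \<open>x \<in> L2\<close> \<open>y \<in> L2\<close>
    unfolding L2sq_pair_def by simp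
qed

lemma closed_op_minimizing_sequence_limit:
  fixes G :: "((real \<Rightarrow> 'a::{complex_inner, complete_space, second_countable_topology}) \<times> (real \<Rightarrow> 'a)) set"
  assumes op: "is_operator G" and closed: "closed_op G" and xy: "x \<in> L2" "y \<in> L2"
    and lower: "\<And>q. q \<in> G \<Longrightarrow> d \<le> L2sq_pair (x, y) q"
    and AB: "\<And>n. (A n, B n) \<in> G" and dist_AB: "\<And>n. L2sq_pair (x, y) (A n, B n) < d + (1/4)^n"
  obtains a b where "(a, b) \<in> G" "L2sq_pair (x, y) (a, b) \<le> d"
proof -
  have L2: "A n \<in> L2" "B n \<in> L2" for n using is_operator_L2[OF op AB] by auto
  \<comment> \<open>uniform convexity turns the rate \<open>4^-n\<close> of minimisation into the rate of a fast Cauchy sequence\<close>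
  have pair_fast: "L2sq_pair (A (Suc n), B (Suc n)) (A n, B n) \<le> 4 * (1/4)^n" for n
  proof -
    have "L2sq_pair (A (Suc n), B (Suc n)) (A n, B n)
        \<le> 2 * L2sq_pair (x, y) (A n, B n) + 2 * L2sq_pair (x, y) (A (Suc n), B (Suc n)) - 4 * d"
      by (rule L2sq_pair_midpoint_le[OF op AB AB xy]) (rule lower)
    moreover have "(1/4::real)^Suc n \<le> (1/4)^n" by (simp add: power_decreasing)
    ultimately show ?thesis using dist_AB[of n] dist_AB[of "Suc n"] by linarith
  qed
  have fast: "L2sq (\<lambda>t. A (Suc n) t - A n t) \<le> 4 * (1/4)^n"
    "L2sq (\<lambda>t. B (Suc n) t - B n t) \<le> 4 * (1/4)^n" for n
    using pair_fast[of n] L2sq_nonneg[of "\<lambda>t. A (Suc n) t - A n t"] L2sq_nonneg[of "\<lambda>t. B (Suc n) t - B n t"]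
    unfolding L2sq_pair_def fst_conv snd_conv by linarith+
  obtain a where a: "a \<in> L2" "(\<lambda>n. L2sq (\<lambda>t. A n t - a t)) \<longlonglongrightarrow> 0"
    using L2_complete[OF L2(1) fast(1)] by blast
  obtain b where b: "b \<in> L2" "(\<lambda>n. L2sq (\<lambda>t. B n t - b t)) \<longlonglongrightarrow> 0"
    using L2_complete[OF L2(2) fast(2)] by blast
  have "(\<lambda>n. L2norm (\<lambda>t. A n t - a t)) \<longlonglongrightarrow> 0" "(\<lambda>n. L2norm (\<lambda>t. B n t - b t)) \<longlonglongrightarrow> 0"
    using tendsto_real_sqrt[OF a(2)] tendsto_real_sqrt[OF b(2)] by (simp_all add: L2norm_eq_sqrt_L2sq)
  then have "(a, b) \<in> G"
    by (rule closed[unfolded closed_op_def, rule_format, of A B a b, OF AB a(1) b(1)])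
  moreover have "L2sq_pair (x, y) (a, b) \<le> d"
  proof (rule LIMSEQ_le[OF tendsto_L2sq_pair[OF xy a(1) b(1) L2 a(2) b(2)]])
    show "(\<lambda>n. d + (1/4)^n) \<longlonglongrightarrow> d"
      using tendsto_add[OF tendsto_const LIMSEQ_power_zero[of "1/4::real"]] by simp
    show "\<exists>N. \<forall>n\<ge>N. L2sq_pair (x, y) (A n, B n) \<le> d + (1/4)^n"
      using dist_AB less_imp_le by blast
  qed
  ultimately show ?thesis by (rule that)
qed

lemma closed_op_nearest_point:
  fixes G :: "((real \<Rightarrow> 'a::{complex_inner, complete_space, second_countable_topology}) \<times> (real \<Rightarrow> 'a)) set"
  assumes op: "is_operator G" and closed: "closed_op G" and xy: "x \<in> L2" "y \<in> L2"
  obtains p where "p \<in> G" "\<And>q. q \<in> G \<Longrightarrow> L2sq_pair (x, y) p \<le> L2sq_pair (x, y) q"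
proof -
  define d where "d = (INF q\<in>G. L2sq_pair (x, y) q)"
  have bdd: "bdd_below ((\<lambda>q. L2sq_pair (x, y) q) ` G)"
    by (rule bdd_belowI[where m = 0]) (auto simp: L2sq_pair_nonneg)
  have lower: "d \<le> L2sq_pair (x, y) q" if "q \<in> G" for q
    unfolding d_def using bdd that by (rule cINF_lower)
  have "\<exists>q\<in>G. L2sq_pair (x, y) q < d + (1/4)^n" for n :: nat
    using cINF_less_iff[OF is_operator_nonempty[OF op] bdd, of "d + (1/4)^n"]
    unfolding d_def by simp
  then obtain P where P: "\<And>n. P n \<in> G" "\<And>n. L2sq_pair (x, y) (P n) < d + (1/4)^n"
    by metis
  obtain a b where "(a, b) \<in> G" "L2sq_pair (x, y) (a, b) \<le> d"
    by (rule closed_op_minimizing_sequence_limit[OF op closed xy lower, of "\<lambda>n. fst (P n)" "\<lambda>n. snd (P n)"])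
       (use P in simp_all)
  with lower show ?thesis by (intro that) force+
qed

lemma nearest_point_orthogonal:
  fixes G :: "((real \<Rightarrow> 'a::{complex_inner, second_countable_topology}) \<times> (real \<Rightarrow> 'a)) set"
  assumes op: "is_operator G" and ab: "(a, b) \<in> G" and xy: "x \<in> L2" "y \<in> L2"
    and nearest: "\<And>q. q \<in> G \<Longrightarrow> L2sq_pair (x, y) (a, b) \<le> L2sq_pair (x, y) q"
    and gk: "(g, k) \<in> G"
  shows "Kinner (\<lambda>t. x t - a t) g + Kinner (\<lambda>t. y t - b t) k = 0"
proof -
  have r: "(\<lambda>t. x t - a t) \<in> L2" and s: "(\<lambda>t. y t - b t) \<in> L2"
    using is_operator_L2[OF op ab] xy by (auto intro: L2_diff)
  \<comment> \<open>first variation of the distance along \<open>(a, b) + s (g, k)\<close>, \<open>s\<close> real\<close>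
  have Re_zero: "Re (Kinner (\<lambda>t. x t - a t) g + Kinner (\<lambda>t. y t - b t) k) = 0"
    if gk: "(g, k) \<in> G" for g k
  proof -
    have L2: "g \<in> L2" "k \<in> L2" using is_operator_L2[OF op gk] by auto
    define Q where "Q = Re (Kinner (\<lambda>t. x t - a t) g + Kinner (\<lambda>t. y t - b t) k)"
    have "0 \<le> 0 + 2 * s * Q + s\<^sup>2 * (L2sq g + L2sq k)" for s
    proof -
      have "((\<lambda>t. a t + (- s) *\<^sub>R g t), (\<lambda>t. b t + (- s) *\<^sub>R k t)) \<in> G"
        by (intro is_operator_add[OF op] is_operator_scaleR[OF op] ab gk)
      from nearest[OF this] show ?thesis
        using L2sq_add_scaleR[OF r L2(1), of s] L2sq_add_scaleR[OF s L2(2), of s]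
        by (simp add: L2sq_pair_def Q_def algebra_simps)
    qed
    then have "Q\<^sup>2 \<le> 0 * (L2sq g + L2sq k)"
      by (rule quadratic_nonneg_discriminant) (simp add: L2sq_nonneg add_nonneg_nonneg)
    then show ?thesis by (simp add: Q_def)
  qed
  have "(\<lambda>t. \<i> *\<^sub>C g t, \<lambda>t. \<i> *\<^sub>C k t) \<in> G" by (rule is_operator_scaleC[OF op gk])
  from Re_zero[OF this] Re_zero[OF gk] show ?thesis
    by (simp add: Kinner_scaleC_right complex_eq_iff algebra_simps)
qed

lemma closed_op_double_adjoint:
  fixes G :: "((real \<Rightarrow> 'a::{complex_inner, complete_space, second_countable_topology}) \<times> (real \<Rightarrow> 'a)) set"
  assumes op: "is_operator G" and closed: "closed_op G" and xy: "x \<in> L2" "y \<in> L2"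
    and adjoint: "\<And>f h. (f, h) \<in> adjoint_op G \<Longrightarrow> Kinner f y = Kinner h x"
  shows "(x, y) \<in> G"
proof -
  obtain p where p: "p \<in> G" and nearest: "\<And>q. q \<in> G \<Longrightarrow> L2sq_pair (x, y) p \<le> L2sq_pair (x, y) q"
    using closed_op_nearest_point[OF op closed xy] by blast
  obtain a b where ab: "p = (a, b)" by fastforce
  have L2: "a \<in> L2" "b \<in> L2" using is_operator_L2[OF op p[unfolded ab]] by auto
  define r where "r t = x t - a t" for t
  define s where "s t = y t - b t" for t
  define m where "m t = a t - x t" for t
  have rsm: "r \<in> L2" "s \<in> L2" "m \<in> L2"
    unfolding r_def s_def m_def using L2 xy by (auto intro: L2_diff)
  \<comment> \<open>the residual \<open>(r, s)\<close> is orthogonal to the graph, i.e. \<open>(s, - r)\<close> lies in the graph of the adjoint\<close>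
  have "(s, m) \<in> adjoint_op G"
    unfolding adjoint_op_def
  proof (clarsimp simp: rsm)
    fix g k assume gk: "(g, k) \<in> G"
    have "g \<in> L2" using is_operator_L2[OF op gk] by simp
    then have "Kinner m g = - Kinner r g"
      unfolding m_def r_def using L2 xy by (simp add: Kinner_diff_left)
    with nearest_point_orthogonal[OF op p[unfolded ab] xy nearest[unfolded ab] gk]
    show "Kinner s k = Kinner m g" unfolding r_def s_def by (simp add: add_eq_0_iff)
  qed
  then have adj: "Kinner s y = Kinner m x" "Kinner s b = Kinner m a"
    using adjoint p ab unfolding adjoint_op_def by auto
  have "Kinner s s = Kinner s y - Kinner s b"
    using Kinner_diff_right[OF rsm(2) xy(2) L2(2)] by (simp add: s_def[abs_def])
  also have "\<dots> = Kinner m x - Kinner m a" by (simp only: adj)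
  also have "\<dots> = Kinner a r - Kinner x r"
    using Kinner_diff_right[OF rsm(3) xy(1) L2(1)] Kinner_diff_left[OF rsm(1) L2(1) xy(1)]
    by (simp add: r_def[abs_def] m_def[abs_def])
  also have "\<dots> = - Kinner r r"
    using Kinner_diff_left[OF rsm(1) xy(1) L2(1)] by (simp add: r_def[abs_def])
  finally have "Kinner s s = - Kinner r r" .
  then have "complex_of_real (L2sq s + L2sq r) = 0" by (simp add: Kinner_self)
  then have "L2sq s + L2sq r = 0" by (simp only: of_real_eq_0_iff)
  then have "AE t in Rplus. s t = 0" "AE t in Rplus. r t = 0"
    using L2sq_nonneg[of s] L2sq_nonneg[of r] by (auto intro!: AE_zero_if_L2sq_zero rsm)
  then have "AE t in Rplus. x t = a t" "AE t in Rplus. y t = b t"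
    unfolding r_def s_def by (auto elim: AE_mp)
  then show ?thesis using is_operator_AE_cong[OF op p[unfolded ab] xy] by blast
qed

section \<open>Functions with vanishing integrals over intervals\<close>

lemma measure_eqI_Ico:
  fixes M N :: "real measure"
  assumes sets: "sets M = sets borel" "sets N = sets borel"
    and eq: "\<And>a b. emeasure M {a..<b} = emeasure N {a..<b}"
    and finite: "\<And>a b. emeasure M {a..<b} \<noteq> \<infinity>"
  shows "M = N"
proof (rule measure_eqI_generator_eq[where E = "range (\<lambda>(a, b). {a..<b})" and \<Omega> = UNIV
      and A = "\<lambda>i. {- real i ..< real i}"])
  show "Int_stable (range (\<lambda>(a, b). {a..<b::real}))"
    unfolding Int_stable_def by (auto intro!: image_eqI[where x = "(max _ _, min _ _)"])
  show "(\<Union>i. {- real i..<real i}) = UNIV"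
  proof (intro set_eqI iffI UNIV_I)
    fix x :: real
    obtain n :: nat where "\<bar>x\<bar> < n" using reals_Archimedean2 by blast
    then have "x \<in> {- real n..<real n}" by (simp add: abs_less_iff)
    then show "x \<in> (\<Union>i. {- real i..<real i})" by blast
  qed
  show "emeasure M {- real i..<real i} \<noteq> \<infinity>" for i by (rule finite)
qed (auto simp: sets borel_eq_atLeastLessThan sets_measure_of eq)

lemma emeasure_density_pos_part_Ico:
  fixes H :: "real \<Rightarrow> real"
  assumes "integrable lborel H"
  shows "emeasure (density lborel (\<lambda>x. ennreal (max 0 (H x)))) {a..<b}
       = ennreal (\<integral>x. max 0 (H x) * indicator {a..<b} x \<partial>lborel)"
proof -
  have [measurable]: "H \<in> borel_measurable lborel" using assms by simp
  have "integrable lborel (\<lambda>x. max 0 (H x) * indicator {a..<b} x)"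
    by (rule Bochner_Integration.integrable_bound[OF integrable_norm[OF assms]])
       (auto simp: indicator_def)
  then show ?thesis
    by (subst emeasure_density, measurable, subst nn_integral_eq_integral[symmetric])
       (auto intro!: nn_integral_cong simp: indicator_def)
qed

lemma AE_zero_if_interval_integrals_zero:
  fixes G :: "real \<Rightarrow> real"
  assumes int: "integrable lborel G"
    and zero: "\<And>a b. (\<integral>x. indicator {a..<b} x * G x \<partial>lborel) = 0"
  shows "AE x in lborel. G x = 0"
proof -
  \<comment> \<open>the positive and negative parts of \<open>G\<close> are densities of the same measure\<close>
  define P where "P H x = ennreal (max 0 (H x))" for H :: "real \<Rightarrow> real" and x
  have [measurable]: "G \<in> borel_measurable lborel" using int by simp
  have part_integrable: "integrable lborel (\<lambda>x. max 0 (H x) * indicator {a..<b} x)"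
    if "integrable lborel H" for H :: "real \<Rightarrow> real" and a b
    by (rule Bochner_Integration.integrable_bound[OF integrable_norm[OF that]])
       (use that in \<open>auto simp: indicator_def\<close>)
  have neg: "integrable lborel (\<lambda>x. - G x)" using int by simp
  have "density lborel (P G) = density lborel (P (\<lambda>x. - G x))"
  proof (rule measure_eqI_Ico)
    fix a b :: real
    have "(\<lambda>x. max 0 (G x) * indicator {a..<b} x - max 0 (- G x) * indicator {a..<b} x)
        = (\<lambda>x. indicator {a..<b} x * G x)"
      by (rule ext) (auto simp: indicator_def)
    then have "(\<integral>x. max 0 (G x) * indicator {a..<b} x \<partial>lborel)
        = (\<integral>x. max 0 (- G x) * indicator {a..<b} x \<partial>lborel)"
      using Bochner_Integration.integral_diff[OF part_integrable[OF int] part_integrable[OF neg], of a b a b]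
        zero[of a b] by simp
    then show "emeasure (density lborel (P G)) {a..<b} = emeasure (density lborel (P (\<lambda>x. - G x))) {a..<b}"
      unfolding P_def emeasure_density_pos_part_Ico[OF int] emeasure_density_pos_part_Ico[OF neg] by simp
    show "emeasure (density lborel (P G)) {a..<b} \<noteq> \<infinity>"
      unfolding P_def emeasure_density_pos_part_Ico[OF int] by simp
  qed simp_all
  moreover have "P G \<in> borel_measurable lborel" "P (\<lambda>x. - G x) \<in> borel_measurable lborel"
    unfolding P_def by measurable
  ultimately have "AE x in lborel. P G x = P (\<lambda>x. - G x) x"
    using sigma_finite_measure.density_unique[OF sigma_finite_lborel] by blast
  then show ?thesis
    by eventually_elim (auto simp: P_def max_def split: if_splits)
qed

lemma AE_zero_if_initial_integrals_zero:
  fixes F :: "real \<Rightarrow> complex"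
  assumes int: "integrable Rplus F"
    and zero: "\<And>t. 0 \<le> t \<Longrightarrow> (\<integral>s. indicator {0..<t} s * F s \<partial>Rplus) = 0"
  shows "AE s in Rplus. F s = 0"
proof -
  have Rplus_sets: "{0::real..} \<inter> space lborel \<in> sets lborel" by simp
  define F' where "F' x = indicator {0..} x *\<^sub>R F x" for x
  have int': "integrable lborel F'"
    using int unfolding Rplus_def F'_def integrable_restrict_space[OF Rplus_sets] .
  have int_ab: "integrable lborel (\<lambda>x. indicator {a..<b} x * F' x)" for a b
    by (rule Bochner_Integration.integrable_bound[OF integrable_norm[OF int']])
       (use int' in \<open>auto simp: indicator_def norm_mult\<close>)
  have zero': "(\<integral>x. indicator {0..<t} x * F' x \<partial>lborel) = 0" if "0 \<le> t" for t
    using zero[OF that] unfolding Rplus_def integral_restrict_space[OF Rplus_sets] F'_def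
    by (simp add: indicator_def conj_commute)
  \<comment> \<open>\<open>[a, b[\<close> differs from \<open>[0, max b 0[\<close> by \<open>[0, max a 0[\<close>, up to the part outside \<open>[0, \<infinity>[\<close> where \<open>F'\<close> vanishes\<close>
  have zero_ab: "(\<integral>x. indicator {a..<b} x * F' x \<partial>lborel) = 0" for a b
  proof (cases "a < b")
    case True
    have "(\<lambda>x. indicator {a..<b} x * F' x)
        = (\<lambda>x. indicator {0..<max b 0} x * F' x - indicator {0..<max a 0} x * F' x)"
      using True by (intro ext) (auto simp: indicator_def F'_def)
    then show ?thesis
      using Bochner_Integration.integral_diff[OF int_ab int_ab] zero'[of "max a 0"] zero'[of "max b 0"]
      by simp
  qed (simp add: indicator_def)
  have "AE x in lborel. L (F' x) = 0" if "bounded_linear L" for L :: "complex \<Rightarrow> real"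
  proof (rule AE_zero_if_interval_integrals_zero)
    show "integrable lborel (\<lambda>x. L (F' x))" by (rule integrable_bounded_linear[OF that int'])
    fix a b :: real
    have "(\<integral>x. indicator {a..<b} x * L (F' x) \<partial>lborel) = (\<integral>x. L (indicator {a..<b} x * F' x) \<partial>lborel)"
      using linear_0[OF bounded_linear.linear[OF that]] by (intro Bochner_Integration.integral_cong) (auto simp: indicator_def)
    also have "\<dots> = L (\<integral>x. indicator {a..<b} x * F' x \<partial>lborel)"
      by (rule integral_bounded_linear[OF that int_ab])
    finally show "(\<integral>x. indicator {a..<b} x * L (F' x) \<partial>lborel) = 0"
      using zero_ab linear_0[OF bounded_linear.linear[OF that]] by simp
  qed
  from this[OF bounded_linear_Re] this[OF bounded_linear_Im]
  have "AE x in lborel. x \<in> {0..} \<longrightarrow> F x = 0"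
    by eventually_elim (auto simp: F'_def complex_eq_iff)
  then show ?thesis unfolding Rplus_def by (subst AE_restrict_space_iff[OF Rplus_sets])
qed

section \<open>Multiplication operators and affiliation\<close>

lemma mulf_cnj_mulf:
  assumes "\<And>t. cmod (\<phi> t) = 1"
  shows "mulf (\<lambda>t. cnj (\<phi> t)) (mulf \<phi> f) = f" "mulf \<phi> (mulf (\<lambda>t. cnj (\<phi> t)) f) = f"
proof -
  have "cnj (\<phi> t) * \<phi> t = 1" for t
    using complex_norm_square[of "\<phi> t"] assms[of t] by (simp add: mult.commute)
  then show "mulf (\<lambda>t. cnj (\<phi> t)) (mulf \<phi> f) = f" "mulf \<phi> (mulf (\<lambda>t. cnj (\<phi> t)) f) = f"
    unfolding mulf_def by (simp_all add: scaleC_scaleC scaleC_one mult.commute)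
qed

lemma affiliated_iff_mulf_invariant:
  fixes T :: "((real \<Rightarrow> 'a::{complex_inner, second_countable_topology}) \<times> (real \<Rightarrow> 'a)) set"
  assumes op: "is_operator T"
  shows "affiliated T \<longleftrightarrow>
    (\<forall>\<phi> g k. \<phi> \<in> borel_measurable Rplus \<longrightarrow> (\<forall>t. cmod (\<phi> t) = 1) \<longrightarrow> (g, k) \<in> T \<longrightarrow>
      (mulf \<phi> g, mulf \<phi> k) \<in> T)"
  (is "_ \<longleftrightarrow> (\<forall>\<phi> g k. ?meas \<phi> \<longrightarrow> _ \<longrightarrow> _ \<longrightarrow> _)")
proof safe
  fix \<phi> :: "real \<Rightarrow> complex" and g k
  assume "affiliated T" "?meas \<phi>" "\<forall>t. cmod (\<phi> t) = 1" "(g, k) \<in> T"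
  then have "(g, k) \<in> comp_left (mulf (\<lambda>t. cnj (\<phi> t))) (comp_right T (mulf \<phi>))"
    unfolding affiliated_def by simp
  then obtain k' where "(mulf \<phi> g, k') \<in> T" "k = mulf (\<lambda>t. cnj (\<phi> t)) k'"
    unfolding comp_left_def comp_right_def by blast
  then show "(mulf \<phi> g, mulf \<phi> k) \<in> T"
    using mulf_cnj_mulf(2)[of \<phi> k'] \<open>\<forall>t. cmod (\<phi> t) = 1\<close> by simp
next
  assume invariant: "\<forall>\<phi> g k. ?meas \<phi> \<longrightarrow> (\<forall>t. cmod (\<phi> t) = 1) \<longrightarrow> (g, k) \<in> T \<longrightarrow>
      (mulf \<phi> g, mulf \<phi> k) \<in> T"
  show "affiliated T"
    unfolding affiliated_def
  proof (intro allI impI set_eqI iffI)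
    fix \<phi> :: "real \<Rightarrow> complex" and p
    assume \<phi>: "?meas \<phi>" "\<forall>t. cmod (\<phi> t) = 1"
    have cnj_\<phi>: "?meas (\<lambda>t. cnj (\<phi> t))" "\<forall>t. cmod (cnj (\<phi> t)) = 1"
      using \<phi> borel_measurable_continuous_on[OF linear_continuous_on[OF bounded_linear_cnj]] by auto
    show "p \<in> T" if "p \<in> comp_left (mulf (\<lambda>t. cnj (\<phi> t))) (comp_right T (mulf \<phi>))"
    proof -
      from that obtain f k where "p = (f, mulf (\<lambda>t. cnj (\<phi> t)) k)" "(mulf \<phi> f, k) \<in> T"
        unfolding comp_left_def comp_right_def by blast
      with invariant cnj_\<phi> show ?thesis using mulf_cnj_mulf(1) \<phi>(2) by metis
    qed
    show "p \<in> comp_left (mulf (\<lambda>t. cnj (\<phi> t))) (comp_right T (mulf \<phi>))" if "p \<in> T"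
    proof -
      from that obtain g k where gk: "p = (g, k)" "(g, k) \<in> T" by (cases p) auto
      then have "g \<in> L2" using is_operator_L2[OF op] by blast
      with invariant \<phi> gk have "(g, mulf \<phi> k) \<in> comp_right T (mulf \<phi>)"
        unfolding comp_right_def by blast
      then show ?thesis
        unfolding comp_left_def gk(1) using mulf_cnj_mulf(1)[of \<phi> k, OF \<phi>(2)[rule_format]] by force
    qed
  qed
qed

definition commutes_with_pt :: "((real \<Rightarrow> 'a::complex_inner) \<times> (real \<Rightarrow> 'a)) set \<Rightarrow> bool" where
  "commutes_with_pt T \<longleftrightarrow> (\<forall>t\<ge>0. comp_left (pt t) T \<subseteq> comp_right T (pt t))"

definition adjoint_pointwise :: "((real \<Rightarrow> 'a::complex_inner) \<times> (real \<Rightarrow> 'a)) set \<Rightarrow> bool" where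
  "adjoint_pointwise T \<longleftrightarrow>
     (\<forall>(f, h) \<in> adjoint_op T. \<forall>(g, k) \<in> T. AE t in Rplus. cinner (f t) (k t) = cinner (h t) (g t))"

lemma affiliated_imp_commutes_with_pt:
  fixes T :: "((real \<Rightarrow> 'a::{complex_inner, second_countable_topology}) \<times> (real \<Rightarrow> 'a)) set"
  assumes op: "is_operator T" and "affiliated T"
  shows "commutes_with_pt T"
  unfolding commutes_with_pt_def
proof (intro allI impI subsetI)
  fix t :: real and p assume "p \<in> comp_left (pt t) T"
  then obtain g k where p: "p = (g, pt t k)" and gk: "(g, k) \<in> T" unfolding comp_left_def by blast
  \<comment> \<open>\<open>p_t = (1 + \<psi>) / 2\<close> for the unitary \<open>\<psi> = 2 p_t - 1\<close>\<close>
  define \<psi> where "\<psi> s = (if s \<in> {0..<t} then 1 else - 1 :: complex)" for s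
  have "\<psi> \<in> borel_measurable Rplus"
    unfolding \<psi>_def Rplus_def by (intro measurable_restrict_space1) measurable
  moreover have "\<forall>s. cmod (\<psi> s) = 1" by (simp add: \<psi>_def)
  ultimately have "(mulf \<psi> g, mulf \<psi> k) \<in> T"
    using affiliated_iff_mulf_invariant[OF op] \<open>affiliated T\<close> gk by blast
  then have "(\<lambda>s. (1/2) *\<^sub>C (g s + mulf \<psi> g s), \<lambda>s. (1/2) *\<^sub>C (k s + mulf \<psi> k s)) \<in> T"
    by (intro is_operator_scaleC[OF op] is_operator_add[OF op] gk)
  moreover have "(1/2) *\<^sub>C (x s + mulf \<psi> x s) = pt t x s" for x :: "real \<Rightarrow> 'a" and s
    unfolding pt_def mulf_def \<psi>_def
    by (simp add: indicator_def scaleC_add_right scaleC_scaleC flip: scaleC_add_left)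
  ultimately have "(pt t g, pt t k) \<in> T" by simp
  moreover have "g \<in> L2" using is_operator_L2[OF op gk] by simp
  ultimately show "p \<in> comp_right T (pt t)" unfolding p comp_right_def by simp
qed

lemma commutes_with_pt_imp_adjoint_pointwise:
  fixes T :: "((real \<Rightarrow> 'a::{complex_inner, second_countable_topology}) \<times> (real \<Rightarrow> 'a)) set"
  assumes op: "is_operator T" and "commutes_with_pt T"
  shows "adjoint_pointwise T"
  unfolding adjoint_pointwise_def
proof (clarify)
  fix f h g k assume fh: "(f, h) \<in> adjoint_op T" and gk: "(g, k) \<in> T"
  have L2: "f \<in> L2" "h \<in> L2" "g \<in> L2" "k \<in> L2"
    using fh is_operator_L2[OF op gk] unfolding adjoint_op_def by auto
  have "AE s in Rplus. cinner (f s) (k s) - cinner (h s) (g s) = 0"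
  proof (rule AE_zero_if_initial_integrals_zero)
    show "integrable Rplus (\<lambda>s. cinner (f s) (k s) - cinner (h s) (g s))"
      by (intro Bochner_Integration.integrable_diff integrable_cinner_L2 L2)
    fix t :: real assume "0 \<le> t"
    have "(g, pt t k) \<in> comp_left (pt t) T" unfolding comp_left_def using gk by blast
    then have pt_T: "(pt t g, pt t k) \<in> T"
      using \<open>commutes_with_pt T\<close> \<open>0 \<le> t\<close> unfolding commutes_with_pt_def comp_right_def by blast
    then have pt_L2: "pt t g \<in> L2" "pt t k \<in> L2" using is_operator_L2[OF op] by blast+
    have "(\<integral>s. indicator {0..<t} s * (cinner (f s) (k s) - cinner (h s) (g s)) \<partial>Rplus)
        = (\<integral>s. cinner (f s) (pt t k s) - cinner (h s) (pt t g s) \<partial>Rplus)"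
      by (intro Bochner_Integration.integral_cong) (simp_all add: pt_def mulf_def cinner_scaleC_right algebra_simps)
    also have "\<dots> = Kinner f (pt t k) - Kinner h (pt t g)"
      unfolding Kinner_def by (intro Bochner_Integration.integral_diff integrable_cinner_L2 L2 pt_L2)
    also have "\<dots> = 0" using fh pt_T unfolding adjoint_op_def by auto
    finally show "(\<integral>s. indicator {0..<t} s * (cinner (f s) (k s) - cinner (h s) (g s)) \<partial>Rplus) = 0" .
  qed
  then show "AE t in Rplus. cinner (f t) (k t) = cinner (h t) (g t)" by simp
qed

lemma adjoint_pointwise_imp_mulf_mem:
  fixes T :: "((real \<Rightarrow> 'a::{complex_inner, complete_space, second_countable_topology}) \<times> (real \<Rightarrow> 'a)) set"
  assumes op: "is_operator T" and closed: "closed_op T" and "adjoint_pointwise T"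
    and "\<psi> \<in> borel_measurable Rplus" "\<And>t. cmod (\<psi> t) \<le> 1" and gk: "(g, k) \<in> T"
  shows "(mulf \<psi> g, mulf \<psi> k) \<in> T"
proof (rule closed_op_double_adjoint[OF op closed])
  have L2: "g \<in> L2" "k \<in> L2" using is_operator_L2[OF op gk] by auto
  then show "mulf \<psi> g \<in> L2" "mulf \<psi> k \<in> L2"
    unfolding mulf_def using assms(4,5) by (auto intro: L2_scaleC_bounded)
  fix f h assume fh: "(f, h) \<in> adjoint_op T"
  then have [measurable]: "f \<in> borel_measurable Rplus" "h \<in> borel_measurable Rplus"
    unfolding adjoint_op_def by (auto intro: L2_borel_measurable)
  note [measurable] = L2[THEN L2_borel_measurable] \<open>\<psi> \<in> borel_measurable Rplus\<close>
  have "AE t in Rplus. cinner (f t) (k t) = cinner (h t) (g t)"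
    using \<open>adjoint_pointwise T\<close> fh gk unfolding adjoint_pointwise_def by blast
  then show "Kinner f (mulf \<psi> k) = Kinner h (mulf \<psi> g)"
    unfolding Kinner_def mulf_def cinner_scaleC_right by (intro integral_cong_AE) auto
qed

theorem lemma3p1:
  fixes T :: "((real \<Rightarrow> 'k::{complex_inner, complete_space, second_countable_topology})
               \<times> (real \<Rightarrow> 'k)) set"
  assumes "is_operator T" and "closed_op T" and "densely_defined T"
  shows "(affiliated T \<longleftrightarrow> (\<forall>t\<ge>0. comp_left (pt t) T \<subseteq> comp_right T (pt t))) \<and>
         ((\<forall>t\<ge>0. comp_left (pt t) T \<subseteq> comp_right T (pt t)) \<longleftrightarrow>
          (\<forall>(f, h) \<in> adjoint_op T. \<forall>(g, k) \<in> T.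
             AE t in Rplus. cinner (f t) (k t) = cinner (h t) (g t)))"
proof -
  note op = \<open>is_operator T\<close> and closed = \<open>closed_op T\<close>
  have "affiliated T \<Longrightarrow> commutes_with_pt T"
    by (rule affiliated_imp_commutes_with_pt[OF op])
  moreover have "commutes_with_pt T \<Longrightarrow> adjoint_pointwise T"
    by (rule commutes_with_pt_imp_adjoint_pointwise[OF op])
  moreover have "adjoint_pointwise T \<Longrightarrow> affiliated T"
    using adjoint_pointwise_imp_mulf_mem[OF op closed]
    by (simp add: affiliated_iff_mulf_invariant[OF op])
  ultimately show ?thesis
    unfolding commutes_with_pt_def[symmetric] adjoint_pointwise_def[symmetric] by blast
qed

end
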